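(* Let $A\in\mathbb R^{n\times n}$ be symmetric with bandwidth $b$, where $1<b<n$, let $Q\in\mathbb R^{2n\times 2n}$ be the orthogonal matrix produced by Algorithm 2 (described in the context) applied to $A$, and set $Q_1=Q(1{:}n,1{:}n)$, $Q_2=Q(n{+}1{:}2n,1{:}n)$. Then for every $1\le k<n$, both $(Q_1Q_2^{T})(1{:}k,\,k{+}1{:}n)$ and $(Q_1Q_2^{T})(k{+}1{:}n,\,1{:}k)$ have rank at most $2b$.
   Context: A matrix has bandwidth $b$ if its $(i,j)$ entry vanishes whenever $|i-j|>b$. A Givens rotation on rows $p\ne q$ is an orthogonal matrix $G\in\mathbb R^{2n\times 2n}$ equal to the identity except in the entries $(p,p),(p,q),(q,p),(q,q)$, which form a $2\times2$ rotation $\begin{bmatrix}c&s\\-s&c\end{bmatrix}$, $c^2+s^2=1$. "Rotate rows $p,q$ to annihilate $R(q,j)$" means: choose such a $G$ for which $(G^{T}R)(q,j)=0$ and then update $R\leftarrow G^{T}R$, $Q\leftarrow QG$. Algorithm 2: Initialize $Q=I_{2n}$, $R=\begin{bmatrix}A\\ I_n\end{bmatrix}\in\mathbb R^{2n\times n}$. First rotate rows $1,n+1$ to annihilate $R(n+1,1)$; then for $j=2,\dots,\min\{n,b+1\}$ rotate rows $1,j$ to annihilate $R(j,1)$. Then for $i=2,\dots,n$: (a) rotate rows $n+1,n+i$ to annihilate $R(n+i,i)$; (b) for $j=i+1,\dots,\min\{n,b+i-1\}$, rotate rows $n+j,n+i$ to annihilate $R(n+i,j)$; (c) rotate rows $i,n+1$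 to annihilate $R(n+1,i)$; (d) if $i<n$, for $j=i+1,\dots,\min\{n,b+i\}$ rotate rows $i,j$ to annihilate $R(j,i)$. On output $QR=\begin{bmatrix}A\\ I\end{bmatrix}$ with $R$ upper triangular. Notation $M(a{:}b,c{:}d)$ denotes the submatrix with rows $a,\dots,b$ and columns $c,\dots,d$. *)

theory Defs
  imports "Jordan_Normal_Form.DL_Rank_Submatrix"
begin

text \<open>All matrices are JNF matrices with 0-based indices; the paper's (1-based)
  row/column index p corresponds to index p - 1 here.\<close>

definition givens :: "nat \<Rightarrow> nat \<Rightarrow> nat \<Rightarrow> real \<Rightarrow> real \<Rightarrow> real mat" where
  "givens N p q c s = mat N N (\<lambda>(i, j).
     if i = p \<and> j = p then c
     else if i = p \<and> j = q then s
     else if i = q \<and> j = p then - s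
     else if i = q \<and> j = q then c
     else if i = j then 1 else 0)"

definition rot_step :: "nat \<Rightarrow> nat \<times> nat \<times> nat \<Rightarrow> real mat \<times> real mat \<Rightarrow> real mat \<times> real mat \<Rightarrow> bool" where
  "rot_step N op st st' \<longleftrightarrow> (case op of (p, q, j) \<Rightarrow>
     (\<exists>c s. c\<^sup>2 + s\<^sup>2 = 1 \<and> p \<noteq> q \<and>
        (let G = givens N (p - 1) (q - 1) c s in
           ((transpose_mat G * snd st) $$ (q - 1, j - 1) = 0 \<and>
            st' = (fst st * G, transpose_mat G * snd st)))))"

inductive rot_seq :: "nat \<Rightarrow> (nat \<times> nat \<times> nat) list \<Rightarrow> real mat \<times> real mat \<Rightarrow> real mat \<times> real mat \<Rightarrow> bool"
  for N where
  Nil: "rot_seq N [] st st"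
| Cons: "rot_step N op st st' \<Longrightarrow> rot_seq N ops st' st'' \<Longrightarrow> rot_seq N (op # ops) st st''"

text \<open>The sequence of rotations performed by Algorithm 2 (paper's 1-based indices),
  each entry (p, q, j) meaning: rotate rows p, q to annihilate R(q, j).\<close>
definition alg2_ops :: "nat \<Rightarrow> nat \<Rightarrow> (nat \<times> nat \<times> nat) list" where
  "alg2_ops n b =
     [(1, n + 1, 1)] @ map (\<lambda>j. (1, j, 1)) [2..<Suc (min n (b + 1))] @
     concat (map (\<lambda>i.
        [(n + 1, n + i, i)]
      @ map (\<lambda>j. (n + j, n + i, j)) [i + 1..<Suc (min n (b + i - 1))]
      @ [(i, n + 1, i)]
      @ (if i < n then map (\<lambda>j. (i, j, i)) [i + 1..<Suc (min n (b + i))] else []))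
      [2..<Suc n])"

definition alg2_init :: "nat \<Rightarrow> real mat \<Rightarrow> real mat \<times> real mat" where
  "alg2_init n A = (one_mat (2 * n),
     mat (2 * n) n (\<lambda>(i, j). if i < n then A $$ (i, j) else if i - n = j then 1 else 0))"

definition alg2_Q :: "nat \<Rightarrow> nat \<Rightarrow> real mat \<Rightarrow> real mat \<Rightarrow> bool" where
  "alg2_Q n b A Q \<longleftrightarrow> (\<exists>R. rot_seq (2 * n) (alg2_ops n b) (alg2_init n A) (Q, R))"

definition bandwidth_le :: "real mat \<Rightarrow> nat \<Rightarrow> bool" where
  "bandwidth_le A b \<longleftrightarrow> (\<forall>i < dim_row A. \<forall>j < dim_col A.
      b < (if i \<le> j then j - i else i - j) \<longrightarrow> A $$ (i, j) = 0)"

end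

theory Submission
  imports Defs
begin

text \<open>
  The rotations preserve \<open>Q R = [A; I]\<close> and the orthogonality of \<open>Q\<close>, and they annihilate the
  lower half of \<open>R\<close>. With \<open>R\<^sub>1\<close> the upper half of \<open>R\<close> this gives \<open>Q\<^sub>1 R\<^sub>1 = A\<close>, \<open>Q\<^sub>2 R\<^sub>1 = I\<close>
  and \<open>Q\<^sub>1\<^sup>T Q\<^sub>1 + Q\<^sub>2\<^sup>T Q\<^sub>2 = I\<close>. So \<open>Q\<^sub>2\<close> is invertible, \<open>Q\<^sub>1 = A Q\<^sub>2\<close>, and the last identity
  reads \<open>Q\<^sub>2\<^sup>T (I + A\<^sup>2) Q\<^sub>2 = I\<close>; hence \<open>P = Q\<^sub>2 Q\<^sub>2\<^sup>T = (I + A\<^sup>2)\<^sup>-\<^sup>1\<close> and \<open>M = Q\<^sub>1 Q\<^sub>2\<^sup>T\<close>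
  satisfy \<open>M = A P\<close> and \<open>A M + P = I\<close>.

  For an off-diagonal block \<open>X = M(S, T)\<close> with \<open>S \<inter> T = {}\<close>, write \<open>C = A(S, S)\<close> and let
  \<open>F = A(S, S')\<close> collect the at most \<open>b\<close> columns outside \<open>S\<close> that the band of \<open>A\<close> reaches
  from \<open>S\<close>. Restricting the two equations to rows \<open>S\<close> and columns \<open>T\<close> gives
  \<open>C X + Y + F G\<^sub>2 = 0\<close> and \<open>X = C Y + F G\<^sub>1\<close> with \<open>Y = P(S, T)\<close>, so
  \<open>(I + C\<^sup>2) X = F G\<^sub>1 - C F G\<^sub>2\<close>. Since \<open>C\<close> is symmetric, \<open>I + C\<^sup>2\<close> is invertible, and \<open>X\<close> is
  a sum of two matrices of rank at most \<open>b\<close>.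
\<close>


lemma index_mult_mat_sum:
  "A \<in> carrier_mat n m \<Longrightarrow> B \<in> carrier_mat m p \<Longrightarrow> i < n \<Longrightarrow> j < p \<Longrightarrow>
   (A * B) $$ (i, j) = (\<Sum>l<m. A $$ (i, l) * B $$ (l, j))"
  by (auto simp: scalar_prod_def atLeast0LessThan intro!: sum.cong)

lemma sum_lessThan_add:
  fixes f :: "nat \<Rightarrow> 'a::comm_monoid_add"
  shows "(\<Sum>l<a + c. f l) = (\<Sum>l<a. f l) + (\<Sum>l<c. f (a + l))"
  by (induction c) (auto simp: add.assoc)

lemma sum_lessThan_over_two_images:
  fixes f :: "nat \<Rightarrow> 'a::comm_monoid_add" and r t :: nat
  assumes "inj_on \<rho> {..<r}" "inj_on \<sigma> {..<t}" "\<rho> ` {..<r} \<inter> \<sigma> ` {..<t} = {}"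
    and "\<rho> ` {..<r} \<union> \<sigma> ` {..<t} \<subseteq> {..<n}"
    and "\<And>l. l < n \<Longrightarrow> l \<notin> \<rho> ` {..<r} \<union> \<sigma> ` {..<t} \<Longrightarrow> f l = 0"
  shows "(\<Sum>l<n. f l) = (\<Sum>l<r. f (\<rho> l)) + (\<Sum>l<t. f (\<sigma> l))"
proof -
  have "(\<Sum>l<n. f l) = (\<Sum>l\<in>\<rho> ` {..<r} \<union> \<sigma> ` {..<t}. f l)"
    using assms(4,5) by (intro sum.mono_neutral_right) auto
  also have "\<dots> = (\<Sum>l\<in>\<rho> ` {..<r}. f l) + (\<Sum>l\<in>\<sigma> ` {..<t}. f l)"
    using assms(3) by (intro sum.union_disjoint) auto
  finally show ?thesis
    using assms(1,2) by (simp add: sum.reindex)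
qed

lemma rank_mult_le_inner_dim:
  fixes U V :: "real mat"
  assumes U: "U \<in> carrier_mat k t" and V: "V \<in> carrier_mat t p"
  shows "vec_space.rank k (U * V) \<le> t"
proof -
  define S where "S m = mat k p (\<lambda>(i, j). \<Sum>l<m. U $$ (i, l) * V $$ (l, j))" for m
  have "vec_space.rank k (S m) \<le> m" for m
  proof (induction m)
    case 0
    have "S 0 = 0\<^sub>m k p" unfolding S_def by (intro eq_matI) auto
    then show ?case using vec_space.rank_0I[where ?'a = real, of k p] by simp
  next
    case (Suc m)
    define T where "T = mat k p (\<lambda>(i, j). U $$ (i, m) * V $$ (m, j))"
    have eq: "S (Suc m) = S m + T"
      unfolding S_def T_def by (intro eq_matI) auto
    have "vec_space.rank k (S (Suc m)) \<le> vec_space.rank k (S m) + vec_space.rank k T"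
      unfolding eq by (rule vec_space.rank_subadditive) (auto simp: S_def T_def)
    moreover have "vec_space.rank k T \<le> 1"
      unfolding T_def
      by (rule vec_space.rank_le_1_product_entries[where f="\<lambda>i. U $$ (i, m)" and g="\<lambda>j. V $$ (m, j)"]) auto
    ultimately show ?case using Suc by simp
  qed
  moreover have "U * V = S t"
    unfolding S_def using U V
    by (intro eq_matI) (auto simp del: index_mult_mat(1) simp: index_mult_mat_sum[OF U V])
  ultimately show ?thesis by simp
qed

lemma det_one_plus_square_nonzero:
  fixes C :: "real mat"
  assumes C: "C \<in> carrier_mat k k" and sym: "transpose_mat C = C"
  shows "det (1\<^sub>m k + C * C) \<noteq> 0"
proof
  define D where "D = 1\<^sub>m k + C * C"
  have D: "D \<in> carrier_mat k k" unfolding D_def using C by auto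
  assume "det (1\<^sub>m k + C * C) = 0"
  then obtain v where v: "v \<in> carrier_vec k" "v \<noteq> 0\<^sub>v k" "D *\<^sub>v v = 0\<^sub>v k"
    using det_0_iff_vec_prod_zero_field[OF D] unfolding D_def by auto
  define w where "w = C *\<^sub>v v"
  have w: "w \<in> carrier_vec k" unfolding w_def using C v by auto
  have "D *\<^sub>v v = v + C *\<^sub>v w" unfolding D_def w_def using C v
    by (subst add_mult_distrib_mat_vec[of _ k k]) auto
  then have "v \<bullet> (v + C *\<^sub>v w) = v \<bullet> 0\<^sub>v k"
    using v by simp
  then have "v \<bullet> (v + C *\<^sub>v w) = 0"
    using v by simp
  then have "v \<bullet> v + v \<bullet> (C *\<^sub>v w) = 0"
    using v w C by (simp add: scalar_prod_add_distrib[of v k])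
  moreover have "v \<bullet> (C *\<^sub>v w) = w \<bullet> w"
    using transpose_vec_mult_scalar[OF C w v(1)] sym w_def by simp
  ultimately have "(\<Sum>i<k. (v $ i)\<^sup>2) + (\<Sum>i<k. (w $ i)\<^sup>2) = 0"
    using v w by (simp add: scalar_prod_def power2_eq_square atLeast0LessThan)
  then have "(\<Sum>i<k. (v $ i)\<^sup>2) = 0"
    by (smt (verit) sum_nonneg zero_le_power2)
  then have "v = 0\<^sub>v k"
    using v by (intro eq_vecI) (auto simp: sum_nonneg_eq_0_iff)
  with v show False by simp
qed

lemma rank_le_of_coupled_equations:
  fixes C X Y F G1 G2 :: "real mat"
  assumes C: "C \<in> carrier_mat k k" and sym: "transpose_mat C = C"
    and X: "X \<in> carrier_mat k p" and Y: "Y \<in> carrier_mat k p"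
    and F: "F \<in> carrier_mat k t" and G1: "G1 \<in> carrier_mat t p" and G2: "G2 \<in> carrier_mat t p"
    and eq1: "C * X + Y + F * G2 = 0\<^sub>m k p"
    and eq2: "X = C * Y + F * G1"
  shows "vec_space.rank k X \<le> 2 * t"
proof -
  define D where "D = 1\<^sub>m k + C * C"
  have D: "D \<in> carrier_mat k k" unfolding D_def using C by auto
  from det_non_zero_imp_unit[OF D det_one_plus_square_nonzero[OF C sym, folded D_def], of "()"]
  obtain Di where Di: "Di \<in> carrier_mat k k" "Di * D = 1\<^sub>m k"
    unfolding Units_def ring_mat_def by auto
  have Y_eq: "Y = - (C * X) + - (F * G2)"
  proof (rule eq_matI)
    fix i j assume "i < dim_row (- (C * X) + - (F * G2))" "j < dim_col (- (C * X) + - (F * G2))"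
    then have ij: "i < k" "j < p" using C X F G2 by auto
    have "(C * X + Y + F * G2) $$ (i, j) = 0" using eq1 ij by simp
    then show "Y $$ (i, j) = (- (C * X) + - (F * G2)) $$ (i, j)" using ij C X Y F G2 by simp
  qed (use C X Y F G2 in auto)
  have DX: "D * X = F * G1 + - (C * (F * G2))"
  proof (rule eq_matI)
    fix i j assume "i < dim_row (F * G1 + - (C * (F * G2)))" "j < dim_col (F * G1 + - (C * (F * G2)))"
    then have ij: "i < k" "j < p" using C X F G1 G2 by auto
    have CY: "C * Y = - (C * (C * X)) + - (C * (F * G2))" unfolding Y_eq
      by (subst mult_add_distrib_mat[of C k k]) (use C X F G2 in auto)
    have "X $$ (i, j) = (- (C * (C * X)) + - (C * (F * G2)) + F * G1) $$ (i, j)"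
      using arg_cong[OF eq2, of "\<lambda>M. M $$ (i, j)"] arg_cong[OF CY, of "\<lambda>M. M $$ (i, j)"]
        ij C X Y F G1 G2 by simp
    moreover have "D * X = X + C * (C * X)" unfolding D_def using C X
      by (simp add: add_mult_distrib_mat[of _ k k])
    ultimately show "(D * X) $$ (i, j) = (F * G1 + - (C * (F * G2))) $$ (i, j)"
      using ij C X F G1 G2 by simp
  qed (use D X F G1 G2 C in auto)
  have "X = Di * (D * X)" using Di D X by (simp add: assoc_mult_mat[symmetric, of Di k k D k X p])
  also have "\<dots> = (Di * F) * G1 + (- (Di * (C * F))) * G2"
    unfolding DX by (subst mult_add_distrib_mat[of Di k k])
      (use Di C F G1 G2 in \<open>auto simp: assoc_mult_mat[of Di k k "C * F" t G2 p] assoc_mult_mat[of C k k F t G2 p]\<close>)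
  finally have X_eq: "X = (Di * F) * G1 + (- (Di * (C * F))) * G2" .
  have "vec_space.rank k X \<le> vec_space.rank k ((Di * F) * G1) + vec_space.rank k ((- (Di * (C * F))) * G2)"
    unfolding X_eq by (rule vec_space.rank_subadditive) (use Di C F G1 G2 in auto)
  moreover have "vec_space.rank k ((Di * F) * G1) \<le> t"
    by (rule rank_mult_le_inner_dim) (use Di F G1 in auto)
  moreover have "vec_space.rank k ((- (Di * (C * F))) * G2) \<le> t"
    by (rule rank_mult_le_inner_dim) (use Di C F G2 in auto)
  ultimately show ?thesis by simp
qed

text \<open>Here \<open>\<rho>\<close>, \<open>\<kappa>\<close> and \<open>\<sigma>\<close> enumerate the index sets \<open>S\<close>, \<open>T\<close> and \<open>S'\<close> of the block argument.\<close>

lemma rank_block_le_of_resolvent: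
  fixes A M P :: "real mat" and \<rho> \<kappa> \<sigma> :: "nat \<Rightarrow> nat"
  assumes A: "A \<in> carrier_mat n n" and sym: "transpose_mat A = A"
    and M: "M \<in> carrier_mat n n" and P: "P \<in> carrier_mat n n"
    and eq1: "A * M + P = 1\<^sub>m n" and eq2: "M = A * P"
    and inj: "inj_on \<rho> {..<r}" "inj_on \<sigma> {..<t}"
    and disj: "\<rho> ` {..<r} \<inter> \<sigma> ` {..<t} = {}"
    and range: "\<rho> ` {..<r} \<union> \<sigma> ` {..<t} \<subseteq> {..<n}" "\<kappa> ` {..<c} \<subseteq> {..<n}"
    and off_diag: "\<And>i j. i < r \<Longrightarrow> j < c \<Longrightarrow> \<rho> i \<noteq> \<kappa> j"
    and band: "\<And>i l. i < r \<Longrightarrow> l < n \<Longrightarrow> l \<notin> \<rho> ` {..<r} \<union> \<sigma> ` {..<t} \<Longrightarrow> A $$ (\<rho> i, l) = 0"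
  shows "vec_space.rank r (mat r c (\<lambda>(i, j). M $$ (\<rho> i, \<kappa> j))) \<le> 2 * t"
proof -
  have ranges: "\<And>i. i < r \<Longrightarrow> \<rho> i < n" "\<And>j. j < c \<Longrightarrow> \<kappa> j < n"
    using range by auto
  define C where "C = mat r r (\<lambda>(i, l). A $$ (\<rho> i, \<rho> l))"
  define F where "F = mat r t (\<lambda>(i, l). A $$ (\<rho> i, \<sigma> l))"
  define blk where "blk Z = mat r c (\<lambda>(i, j). Z $$ (\<rho> i, \<kappa> j))" for Z :: "real mat"
  define cpl where "cpl Z = mat t c (\<lambda>(l, j). Z $$ (\<sigma> l, \<kappa> j))" for Z :: "real mat"
  have dims: "C \<in> carrier_mat r r" "F \<in> carrier_mat r t"
    "\<And>Z. blk Z \<in> carrier_mat r c" "\<And>Z. cpl Z \<in> carrier_mat t c"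
    unfolding C_def F_def blk_def cpl_def by auto
  have A_mult: "(A * Z) $$ (\<rho> i, \<kappa> j) = (C * blk Z + F * cpl Z) $$ (i, j)"
    if Z: "Z \<in> carrier_mat n n" and ij: "i < r" "j < c" for Z i j
  proof -
    have "(A * Z) $$ (\<rho> i, \<kappa> j) = (\<Sum>l<n. A $$ (\<rho> i, l) * Z $$ (l, \<kappa> j))"
      using ij ranges by (intro index_mult_mat_sum[OF A Z])
    also have "\<dots> = (\<Sum>l<r. A $$ (\<rho> i, \<rho> l) * Z $$ (\<rho> l, \<kappa> j))
        + (\<Sum>l<t. A $$ (\<rho> i, \<sigma> l) * Z $$ (\<sigma> l, \<kappa> j))"
      by (rule sum_lessThan_over_two_images[OF inj disj range(1)]) (simp add: band ij)
    also have "\<dots> = (C * blk Z) $$ (i, j) + (F * cpl Z) $$ (i, j)"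
      unfolding index_mult_mat_sum[OF dims(1) dims(3) ij] index_mult_mat_sum[OF dims(2) dims(4) ij]
      using ij by (simp add: C_def F_def blk_def cpl_def)
    also have "\<dots> = (C * blk Z + F * cpl Z) $$ (i, j)"
      using ij dims(1-2) dims(3-4)[of Z] by simp
    finally show ?thesis .
  qed
  have "A $$ (\<rho> l, \<rho> i) = A $$ (\<rho> i, \<rho> l)" if "i < r" "l < r" for i l
    using arg_cong[OF sym, of "\<lambda>B. B $$ (\<rho> i, \<rho> l)"] A that ranges by auto
  then have C_sym: "transpose_mat C = C"
    unfolding C_def by (intro eq_matI) auto
  have "C * blk M + blk P + F * cpl M = 0\<^sub>m r c"
  proof (rule eq_matI)
    fix i j assume "i < dim_row (0\<^sub>m r c :: real mat)" "j < dim_col (0\<^sub>m r c :: real mat)"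
    then have ij: "i < r" "j < c" by auto
    then have "(A * M + P) $$ (\<rho> i, \<kappa> j) = 0"
      using eq1 ranges off_diag by auto
    then show "(C * blk M + blk P + F * cpl M) $$ (i, j) = 0\<^sub>m r c $$ (i, j)"
      using ij ranges dims(1-2) dims(3-4)[of M] dims(3)[of P] A M P A_mult[OF M ij]
      by (auto simp: blk_def)
  qed (simp_all add: C_def F_def blk_def cpl_def)
  moreover have "blk M = C * blk P + F * cpl P"
  proof (rule eq_matI)
    fix i j assume "i < dim_row (C * blk P + F * cpl P)" "j < dim_col (C * blk P + F * cpl P)"
    then have ij: "i < r" "j < c" using dims(1,2) dims(4)[of P] by auto
    then show "blk M $$ (i, j) = (C * blk P + F * cpl P) $$ (i, j)"
      using A_mult[OF P ij] eq2 by (simp add: blk_def)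
  qed (simp_all add: C_def F_def blk_def cpl_def)
  ultimately have "vec_space.rank r (blk M) \<le> 2 * t"
    using rank_le_of_coupled_equations[OF dims(1) C_sym dims(3,3) dims(2) dims(4,4)] by blast
  then show ?thesis unfolding blk_def .
qed

lemma bandwidth_le_zero:
  "bandwidth_le A b \<Longrightarrow> i < dim_row A \<Longrightarrow> j < dim_col A \<Longrightarrow>
   b < (if i \<le> j then j - i else i - j) \<Longrightarrow> A $$ (i, j) = 0"
  unfolding bandwidth_le_def by auto

lemma pick_atLeastLessThan: "a + j < e \<Longrightarrow> pick {a..<e} j = a + j"
  by (induction j) (auto intro!: Least_equality)

lemma submatrix_upper_right:
  assumes "M \<in> carrier_mat n n" and "k \<le> n"
  shows "submatrix M {..<k} {k..<n} = mat k (n - k) (\<lambda>(i, j). M $$ (i, k + j))"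
proof -
  have "{i. i < dim_row M \<and> i \<in> {..<k}} = {..<k}" "{i. i < dim_col M \<and> i \<in> {k..<n}} = {k..<n}"
    using assms by auto
  then show ?thesis
    unfolding submatrix_def using pick_atLeastLessThan[of 0 _ k] pick_atLeastLessThan[of k _ n]
    by (intro eq_matI) (auto simp: lessThan_atLeast0)
qed

lemma submatrix_lower_left:
  assumes "M \<in> carrier_mat n n" and "k \<le> n"
  shows "submatrix M {k..<n} {..<k} = mat (n - k) k (\<lambda>(i, j). M $$ (k + i, j))"
proof -
  have "{i. i < dim_col M \<and> i \<in> {..<k}} = {..<k}" "{i. i < dim_row M \<and> i \<in> {k..<n}} = {k..<n}"
    using assms by auto
  then show ?thesis
    unfolding submatrix_def using pick_atLeastLessThan[of 0 _ k] pick_atLeastLessThan[of k _ n]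
    by (intro eq_matI) (auto simp: lessThan_atLeast0)
qed

lemma banded_resolvent_offdiag_rank_le:
  fixes A M P :: "real mat"
  assumes A: "A \<in> carrier_mat n n" and sym: "transpose_mat A = A" and band: "bandwidth_le A b"
    and M: "M \<in> carrier_mat n n" and P: "P \<in> carrier_mat n n"
    and eq1: "A * M + P = 1\<^sub>m n" and eq2: "M = A * P" and k: "k \<le> n"
  shows "vec_space.rank k (submatrix M {..<k} {k..<n}) \<le> 2 * b"
    and "vec_space.rank (n - k) (submatrix M {k..<n} {..<k}) \<le> 2 * b"
proof -
  note block = rank_block_le_of_resolvent[OF A sym M P eq1 eq2]
  define t where "t = min b (n - k)"
  have "vec_space.rank k (mat k (n - k) (\<lambda>(i, j). M $$ ((\<lambda>i. i) i, k + j))) \<le> 2 * t"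
  proof (rule block[where \<rho> = "\<lambda>i. i" and \<sigma> = "(+) k" and \<kappa> = "(+) k"])
    show "A $$ (i, l) = 0" if "i < k" "l < n" "l \<notin> (\<lambda>i. i) ` {..<k} \<union> (+) k ` {..<t}" for i l
    proof -
      have "k + t \<le> l"
      proof (rule ccontr)
        assume "\<not> k + t \<le> l"
        moreover have "k \<le> l" using that(3) by auto
        ultimately have "l = k + (l - k)" "l - k < t" by auto
        then show False using that(3) by blast
      qed
      then show ?thesis using that A unfolding t_def by (intro bandwidth_le_zero[OF band]) auto
    qed
  qed (use k in \<open>auto simp: t_def inj_on_def\<close>)
  then show "vec_space.rank k (submatrix M {..<k} {k..<n}) \<le> 2 * b"
    using submatrix_upper_right[OF M k] unfolding t_def by simp
  define s where "s = min b k"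
  have "vec_space.rank (n - k) (mat (n - k) k (\<lambda>(i, j). M $$ (k + i, (\<lambda>j. j) j))) \<le> 2 * s"
  proof (rule block[where \<rho> = "(+) k" and \<sigma> = "\<lambda>l. k - s + l" and \<kappa> = "\<lambda>j. j"])
    show "A $$ (k + i, l) = 0"
      if "i < n - k" "l < n" "l \<notin> (+) k ` {..<n - k} \<union> (\<lambda>l. k - s + l) ` {..<s}" for i l
    proof -
      have "l < k"
      proof (rule ccontr)
        assume "\<not> l < k"
        then have "l = k + (l - k)" "l - k < n - k" using that(2) by auto
        then show False using that(3) by blast
      qed
      have "l + s < k"
      proof (rule ccontr)
        assume "\<not> l + s < k"
        with \<open>l < k\<close> have "l = k - s + (l - (k - s))" "l - (k - s) < s" by auto
        then show False using that(3) by blast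
      qed
      then show ?thesis using that A unfolding s_def by (intro bandwidth_le_zero[OF band]) auto
    qed
  qed (use k in \<open>auto simp: s_def inj_on_def\<close>)
  then show "vec_space.rank (n - k) (submatrix M {k..<n} {..<k}) \<le> 2 * b"
    using submatrix_lower_left[OF M k] unfolding s_def by simp
qed

definition top_square :: "nat \<Rightarrow> real mat \<Rightarrow> real mat" where
  "top_square n Q = mat n n (\<lambda>(i, j). Q $$ (i, j))"

definition bottom_square :: "nat \<Rightarrow> real mat \<Rightarrow> real mat" where
  "bottom_square n Q = mat n n (\<lambda>(i, j). Q $$ (n + i, j))"

lemma square_blocks_carrier [simp]:
  "top_square n Q \<in> carrier_mat n n" "bottom_square n Q \<in> carrier_mat n n"
  "dim_row (top_square n Q) = n" "dim_col (top_square n Q) = n"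
  "dim_row (bottom_square n Q) = n" "dim_col (bottom_square n Q) = n"
  unfolding top_square_def bottom_square_def by auto

lemma index_square_blocks [simp]:
  "i < n \<Longrightarrow> j < n \<Longrightarrow> top_square n Q $$ (i, j) = Q $$ (i, j)"
  "i < n \<Longrightarrow> j < n \<Longrightarrow> bottom_square n Q $$ (i, j) = Q $$ (n + i, j)"
  unfolding top_square_def bottom_square_def by auto

lemma stacked_QR_square_blocks:
  fixes Q R A :: "real mat"
  assumes A: "A \<in> carrier_mat n n"
    and Q: "Q \<in> carrier_mat (2 * n) (2 * n)" and R: "R \<in> carrier_mat (2 * n) n"
    and orth: "transpose_mat Q * Q = 1\<^sub>m (2 * n)"
    and QR: "Q * R = mat (2 * n) n (\<lambda>(i, j). if i < n then A $$ (i, j) else if i - n = j then 1 else 0)"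
    and R_lower: "\<And>i j. n \<le> i \<Longrightarrow> i < 2 * n \<Longrightarrow> j < n \<Longrightarrow> R $$ (i, j) = 0"
  shows "top_square n Q * top_square n R = A"
    and "bottom_square n Q * top_square n R = 1\<^sub>m n"
    and "transpose_mat (top_square n Q) * top_square n Q
       + transpose_mat (bottom_square n Q) * bottom_square n Q = 1\<^sub>m n"
proof -
  note sq = square_blocks_carrier
  have QR_sum: "(Q * R) $$ (i, j) = (\<Sum>l<n. Q $$ (i, l) * R $$ (l, j))" if "i < 2 * n" "j < n" for i j
  proof -
    have "(Q * R) $$ (i, j) = (\<Sum>l<n + n. Q $$ (i, l) * R $$ (l, j))"
      using index_mult_mat_sum[OF Q R that] by (simp add: mult_2)
    also have "\<dots> = (\<Sum>l<n. Q $$ (i, l) * R $$ (l, j)) + (\<Sum>l<n. Q $$ (i, n + l) * R $$ (n + l, j))"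
      by (rule sum_lessThan_add)
    also have "(\<Sum>l<n. Q $$ (i, n + l) * R $$ (n + l, j)) = 0"
      using R_lower that by (intro sum.neutral) auto
    finally show ?thesis by simp
  qed
  show "top_square n Q * top_square n R = A"
  proof (rule eq_matI)
    fix i j assume "i < dim_row A" "j < dim_col A"
    then have ij: "i < n" "j < n" using A by auto
    have "(top_square n Q * top_square n R) $$ (i, j) = (Q * R) $$ (i, j)"
      using ij QR_sum by (simp add: index_mult_mat_sum[OF sq(1) sq(1) ij])
    then show "(top_square n Q * top_square n R) $$ (i, j) = A $$ (i, j)"
      using ij by (simp add: QR)
  qed (use A in auto)
  show "bottom_square n Q * top_square n R = 1\<^sub>m n"
  proof (rule eq_matI)
    fix i j assume "i < dim_row (1\<^sub>m n :: real mat)" "j < dim_col (1\<^sub>m n :: real mat)"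
    then have ij: "i < n" "j < n" by auto
    have "(bottom_square n Q * top_square n R) $$ (i, j) = (Q * R) $$ (n + i, j)"
      using ij QR_sum by (simp add: index_mult_mat_sum[OF sq(2) sq(1) ij])
    then show "(bottom_square n Q * top_square n R) $$ (i, j) = 1\<^sub>m n $$ (i, j)"
      using ij by (simp add: QR)
  qed auto
  show "transpose_mat (top_square n Q) * top_square n Q
      + transpose_mat (bottom_square n Q) * bottom_square n Q = 1\<^sub>m n"
  proof (rule eq_matI)
    fix i j assume "i < dim_row (1\<^sub>m n :: real mat)" "j < dim_col (1\<^sub>m n :: real mat)"
    then have ij: "i < n" "j < n" by auto
    note T = transpose_carrier_mat[THEN iffD2]
    have "(transpose_mat (top_square n Q) * top_square n Q
        + transpose_mat (bottom_square n Q) * bottom_square n Q) $$ (i, j)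
      = (transpose_mat (top_square n Q) * top_square n Q) $$ (i, j)
        + (transpose_mat (bottom_square n Q) * bottom_square n Q) $$ (i, j)"
      using ij by simp
    also have "\<dots> = (\<Sum>l<n. Q $$ (l, i) * Q $$ (l, j)) + (\<Sum>l<n. Q $$ (n + l, i) * Q $$ (n + l, j))"
      unfolding index_mult_mat_sum[OF T[OF sq(1)] sq(1) ij] index_mult_mat_sum[OF T[OF sq(2)] sq(2) ij]
      using ij by simp
    also have "\<dots> = (\<Sum>l<n + n. Q $$ (l, i) * Q $$ (l, j))"
      by (rule sum_lessThan_add[symmetric])
    also have "\<dots> = (transpose_mat Q * Q) $$ (i, j)"
      using index_mult_mat_sum[of "transpose_mat Q" "2 * n" "2 * n" Q "2 * n" i j] ij Q
      by (simp del: index_mult_mat(1) add: mult_2)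
    finally show "(transpose_mat (top_square n Q) * top_square n Q
        + transpose_mat (bottom_square n Q) * bottom_square n Q) $$ (i, j) = 1\<^sub>m n $$ (i, j)"
      using ij by (simp add: orth)
  qed auto
qed

lemma resolvent_of_stacked_factors:
  fixes A Q1 Q2 R1 :: "real mat"
  assumes A: "A \<in> carrier_mat n n" and sym: "transpose_mat A = A"
    and Q1: "Q1 \<in> carrier_mat n n" and Q2: "Q2 \<in> carrier_mat n n" and R1: "R1 \<in> carrier_mat n n"
    and F1: "Q1 * R1 = A" and F2: "Q2 * R1 = 1\<^sub>m n"
    and F3: "transpose_mat Q1 * Q1 + transpose_mat Q2 * Q2 = 1\<^sub>m n"
  shows "Q1 * transpose_mat Q2 = A * (Q2 * transpose_mat Q2)"
    and "A * (Q1 * transpose_mat Q2) + Q2 * transpose_mat Q2 = 1\<^sub>m n"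
proof -
  define P where "P = Q2 * transpose_mat Q2"
  define H where "H = A * A + 1\<^sub>m n"
  have Q2T: "transpose_mat Q2 \<in> carrier_mat n n" and R1T: "transpose_mat R1 \<in> carrier_mat n n"
    and AA: "A * A \<in> carrier_mat n n" and P: "P \<in> carrier_mat n n" and H: "H \<in> carrier_mat n n"
    using A Q2 R1 unfolding P_def H_def by auto
  have Q1_eq: "Q1 = A * Q2"
  proof -
    have "Q1 = Q1 * (R1 * Q2)"
      using mat_mult_left_right_inverse[OF Q2 R1 F2] Q1 by simp
    also have "\<dots> = (Q1 * R1) * Q2" using Q1 R1 Q2 by simp
    finally show ?thesis unfolding F1 .
  qed
  show M_eq: "Q1 * transpose_mat Q2 = A * P"
    unfolding P_def Q1_eq by (rule assoc_mult_mat[OF A Q2 Q2T])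
  have "transpose_mat Q1 * Q1 = transpose_mat Q2 * ((A * A) * Q2)"
    unfolding Q1_eq using A Q2 Q2T
    by (simp add: transpose_mult[OF A Q2] sym assoc_mult_mat[OF Q2T A, of "A * Q2" n])
  then have "transpose_mat Q2 * ((A * A) * Q2) + transpose_mat Q2 * Q2 = 1\<^sub>m n"
    using F3 by simp
  then have Q2_H: "transpose_mat Q2 * (H * Q2) = 1\<^sub>m n" unfolding H_def using A Q2 Q2T AA
    by (simp add: add_mult_distrib_mat[OF AA _ Q2] mult_add_distrib_mat[OF Q2T, of "A * (A * Q2)" n Q2])
  have R1Q2: "transpose_mat R1 * transpose_mat Q2 = 1\<^sub>m n"
    using transpose_mult[OF Q2 R1] F2 by simp
  have "H * Q2 = (transpose_mat R1 * transpose_mat Q2) * (H * Q2)" unfolding R1Q2 using H Q2 by simp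
  also have "\<dots> = transpose_mat R1 * (transpose_mat Q2 * (H * Q2))"
    by (rule assoc_mult_mat[OF R1T Q2T]) (use H Q2 in auto)
  finally have "H * Q2 = transpose_mat R1" unfolding Q2_H using R1T by simp
  then have HP: "H * P = 1\<^sub>m n"
    unfolding P_def using assoc_mult_mat[symmetric, OF H Q2 Q2T] R1Q2 by simp
  have "A * (A * P) + P = (A * A) * P + 1\<^sub>m n * P" using A P by simp
  also have "\<dots> = H * P" unfolding H_def using AA P by (simp add: add_mult_distrib_mat[OF AA _ P])
  finally show "A * (Q1 * transpose_mat Q2) + P = 1\<^sub>m n" unfolding M_eq HP .
qed

lemma givens_carrier [simp]:
  "givens N p q c s \<in> carrier_mat N N" "dim_row (givens N p q c s) = N" "dim_col (givens N p q c s) = N"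
  unfolding givens_def by auto

lemma transpose_givens_mult_index:
  fixes X :: "real mat"
  assumes X: "X \<in> carrier_mat N m" and pq: "p < N" "q < N" "p \<noteq> q" and r: "r < N" and j: "j < m"
  shows "(transpose_mat (givens N p q c s) * X) $$ (r, j) =
    (if r = p then c * X $$ (p, j) - s * X $$ (q, j)
     else if r = q then s * X $$ (p, j) + c * X $$ (q, j) else X $$ (r, j))"
proof -
  let ?G = "givens N p q c s"
  let ?a = "(if r = p then c else if r = q then s else 0) * X $$ (p, j)"
  let ?b = "(if r = p then - s else if r = q then c else 0) * X $$ (q, j)"
  let ?g = "(if r \<noteq> p \<and> r \<noteq> q then X $$ (r, j) else 0)"
  have "(transpose_mat ?G * X) $$ (r, j) = (\<Sum>l<N. transpose_mat ?G $$ (r, l) * X $$ (l, j))"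
    by (rule index_mult_mat_sum[OF _ X r j]) simp
  also have "\<dots> = (\<Sum>l<N. (if l = p then ?a else 0) + (if l = q then ?b else 0) + (if l = r then ?g else 0))"
    using pq r by (intro sum.cong) (auto simp: givens_def)
  also have "\<dots> = ?a + ?b + ?g"
    using pq r by (simp add: sum.distrib)
  finally show ?thesis using pq by auto
qed

lemma givens_orthogonal:
  assumes pq: "p < N" "q < N" "p \<noteq> q" and cs: "c\<^sup>2 + s\<^sup>2 = (1::real)"
  shows "transpose_mat (givens N p q c s) * givens N p q c s = 1\<^sub>m N"
    and "givens N p q c s * transpose_mat (givens N p q c s) = 1\<^sub>m N"
proof -
  show left: "transpose_mat (givens N p q c s) * givens N p q c s = 1\<^sub>m N"
  proof (rule eq_matI)
    fix i j assume "i < dim_row (1\<^sub>m N :: real mat)" "j < dim_col (1\<^sub>m N :: real mat)"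
    then have ij: "i < N" "j < N" by auto
    show "(transpose_mat (givens N p q c s) * givens N p q c s) $$ (i, j) = 1\<^sub>m N $$ (i, j)"
      unfolding transpose_givens_mult_index[OF givens_carrier(1) pq ij]
      using ij pq cs by (auto simp: givens_def power2_eq_square algebra_simps)
  qed auto
  show "givens N p q c s * transpose_mat (givens N p q c s) = 1\<^sub>m N"
    by (rule mat_mult_left_right_inverse[OF _ _ left]) auto
qed

lemma rot_stepE:
  assumes "rot_step N (p, q, j) st st'"
  obtains c s where "c\<^sup>2 + s\<^sup>2 = 1" "p \<noteq> q"
    "(transpose_mat (givens N (p - 1) (q - 1) c s) * snd st) $$ (q - 1, j - 1) = 0"
    "st' = (fst st * givens N (p - 1) (q - 1) c s, transpose_mat (givens N (p - 1) (q - 1) c s) * snd st)"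
  using assms unfolding rot_step_def Let_def by auto

lemma rot_step_R_carrier:
  "rot_step N (p, q, j) st st' \<Longrightarrow> snd st \<in> carrier_mat N m \<Longrightarrow> snd st' \<in> carrier_mat N m"
  by (auto elim!: rot_stepE)

lemma rot_step_QR:
  assumes st: "rot_step N (p, q, j) st st'"
    and R: "snd st \<in> carrier_mat N m" and Q: "fst st \<in> carrier_mat N N"
    and p: "1 \<le> p" "p \<le> N" and q: "1 \<le> q" "q \<le> N"
    and orth: "transpose_mat (fst st) * fst st = 1\<^sub>m N"
  shows "fst st' \<in> carrier_mat N N" and "fst st' * snd st' = fst st * snd st"
    and "transpose_mat (fst st') * fst st' = 1\<^sub>m N"
proof -
  obtain c s where cs: "c\<^sup>2 + s\<^sup>2 = 1" "p \<noteq> q"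
    and st': "st' = (fst st * givens N (p - 1) (q - 1) c s,
                     transpose_mat (givens N (p - 1) (q - 1) c s) * snd st)"
    using rot_stepE[OF st] by blast
  have pq: "p - 1 < N" "q - 1 < N" "p - 1 \<noteq> q - 1" using p q cs by auto
  define G where "G = givens N (p - 1) (q - 1) c s"
  note G_orth = givens_orthogonal[OF pq cs(1), folded G_def]
  have G: "G \<in> carrier_mat N N" and GT: "transpose_mat G \<in> carrier_mat N N"
    unfolding G_def by simp_all
  have st'_G: "st' = (fst st * G, transpose_mat G * snd st)" unfolding st' G_def ..
  show "fst st' \<in> carrier_mat N N" unfolding st'_G using Q G by auto
  have "fst st' * snd st' = fst st * (G * (transpose_mat G * snd st))"
    unfolding st'_G fst_conv snd_conv by (rule assoc_mult_mat) (use Q R G in auto)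
  also have "\<dots> = fst st * ((G * transpose_mat G) * snd st)"
    using R G GT by (simp add: assoc_mult_mat[of G N N _ N _ m])
  also have "\<dots> = fst st * snd st" unfolding G_orth(2) using R by simp
  finally show "fst st' * snd st' = fst st * snd st" .
  have "transpose_mat (fst st') * fst st' = transpose_mat G * ((transpose_mat (fst st) * fst st) * G)"
    unfolding st'_G using Q G GT
    by (simp add: transpose_mult[of _ N N] assoc_mult_mat[of _ N N _ N _ N])
  also have "\<dots> = 1\<^sub>m N" unfolding orth using G_orth(1) G by simp
  finally show "transpose_mat (fst st') * fst st' = 1\<^sub>m N" .
qed

lemma rot_seq_QR:
  assumes "rot_seq N ops st st'"
  shows "(\<forall>(p, q, j) \<in> set ops. 1 \<le> p \<and> p \<le> N \<and> 1 \<le> q \<and> q \<le> N) \<Longrightarrow>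
    fst st \<in> carrier_mat N N \<Longrightarrow> snd st \<in> carrier_mat N m \<Longrightarrow>
    transpose_mat (fst st) * fst st = 1\<^sub>m N \<Longrightarrow>
    fst st' \<in> carrier_mat N N \<and> snd st' \<in> carrier_mat N m \<and> fst st' * snd st' = fst st * snd st
    \<and> transpose_mat (fst st') * fst st' = 1\<^sub>m N"
  using assms
proof (induction rule: rot_seq.induct)
  case (Nil st)
  then show ?case by simp
next
  case (Cons op st st' ops st'')
  obtain p q j where op: "op = (p, q, j)" by (cases op)
  have pq: "1 \<le> p" "p \<le> N" "1 \<le> q" "q \<le> N" using Cons.prems(1) op by auto
  have st: "rot_step N (p, q, j) st st'" using Cons.hyps(1) op by simp
  note QR = rot_step_QR[OF st Cons.prems(3) Cons.prems(2) pq Cons.prems(4)]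
  have R: "snd st' \<in> carrier_mat N m" using rot_step_R_carrier[OF st Cons.prems(3)] .
  have "fst st'' \<in> carrier_mat N N \<and> snd st'' \<in> carrier_mat N m \<and> fst st'' * snd st'' = fst st' * snd st'
    \<and> transpose_mat (fst st'') * fst st'' = 1\<^sub>m N"
    using Cons.IH Cons.prems(1) QR R by auto
  then show ?case using QR by simp
qed

lemma rot_seq_appendD: "rot_seq N (xs @ ys) s s'' \<Longrightarrow> \<exists>s'. rot_seq N xs s s' \<and> rot_seq N ys s' s''"
proof (induction xs arbitrary: s)
  case Nil
  then show ?case using rot_seq.Nil[of N s] by (metis append_Nil)
next
  case (Cons x xs)
  from Cons.prems obtain s1 where "rot_step N x s s1" "rot_seq N (xs @ ys) s1 s''"
    by (auto elim: rot_seq.cases)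
  with Cons.IH show ?case by (meson rot_seq.Cons)
qed

lemma rot_seq_singleD: "rot_seq N [x] s s' \<Longrightarrow> rot_step N x s s'"
  by (auto elim!: rot_seq.cases)

lemma rot_seq_concat_induct:
  assumes step: "\<And>j st st'. a \<le> j \<Longrightarrow> j < e \<Longrightarrow> I j st \<Longrightarrow> rot_seq N (g j) st st' \<Longrightarrow> I (Suc j) st'"
  shows "rot_seq N (concat (map g [a..<e])) st st' \<Longrightarrow> I a st \<Longrightarrow> a \<le> e \<Longrightarrow> I e st'"
  using step
proof (induction "e - a" arbitrary: a st)
  case 0
  then show ?case by (auto elim: rot_seq.cases)
next
  case (Suc d)
  then have "a < e" by simp
  then have "[a..<e] = a # [Suc a..<e]" by (simp add: upt_conv_Cons)
  with Suc.prems(1) have "rot_seq N (g a @ concat (map g [Suc a..<e])) st st'" by simp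
  then obtain s1 where s1: "rot_seq N (g a) st s1" "rot_seq N (concat (map g [Suc a..<e])) s1 st'"
    using rot_seq_appendD by blast
  have "I (Suc a) s1" using Suc.prems(4)[OF _ \<open>a < e\<close> Suc.prems(2) s1(1)] by simp
  show ?case
    by (rule Suc.hyps(1)[of "Suc a" s1])
      (use Suc.hyps(2) \<open>a < e\<close> s1 \<open>I (Suc a) s1\<close> Suc.prems(4) in auto)
qed

lemma rot_seq_map_induct:
  assumes step: "\<And>j st st'. a \<le> j \<Longrightarrow> j < e \<Longrightarrow> I j st \<Longrightarrow> rot_step N (f j) st st' \<Longrightarrow> I (Suc j) st'"
  shows "rot_seq N (map f [a..<e]) st st' \<Longrightarrow> I a st \<Longrightarrow> a \<le> e \<Longrightarrow> I e st'"
proof -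
  have "map f [a..<e] = concat (map (\<lambda>j. [f j]) [a..<e])" by (induction "[a..<e]") auto
  then show "rot_seq N (map f [a..<e]) st st' \<Longrightarrow> I a st \<Longrightarrow> a \<le> e \<Longrightarrow> I e st'"
    using rot_seq_concat_induct[of a e I N "\<lambda>j. [f j]"] step rot_seq_singleD by metis
qed

text \<open>Zero patterns are tracked in the paper's 1-based indices, matching the rotation list.
  An empty window such as \<open>lo = m + 1, hi = 0\<close> says that the whole row vanishes.\<close>

definition row_zero_outside :: "nat \<Rightarrow> real mat \<Rightarrow> nat \<Rightarrow> nat \<Rightarrow> nat \<Rightarrow> bool" where
  "row_zero_outside m R r lo hi \<longleftrightarrow>
     (\<forall>C. 1 \<le> C \<longrightarrow> C \<le> m \<longrightarrow> (C < lo \<or> hi < C) \<longrightarrow> R $$ (r - 1, C - 1) = 0)"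

lemma row_zero_outside_mono:
  "row_zero_outside m R r lo hi \<Longrightarrow> lo' \<le> lo \<Longrightarrow> hi \<le> hi' \<Longrightarrow> row_zero_outside m R r lo' hi'"
  unfolding row_zero_outside_def by fastforce

text \<open>A rotation of rows \<open>p, q\<close> replaces both by combinations of the two old rows, so both
  stay inside a common window; row \<open>q\<close> also loses the annihilated entry, which shrinks its window
  from the left when that entry sits at the window's left end.\<close>

lemma rot_step_R:
  assumes st: "rot_step N (p, q, j) st st'" and R: "snd st \<in> carrier_mat N m"
    and p: "1 \<le> p" "p \<le> N" and q: "1 \<le> q" "q \<le> N"
  shows "\<And>r lo hi. 1 \<le> r \<Longrightarrow> r \<le> N \<Longrightarrow> r \<noteq> p \<Longrightarrow> r \<noteq> q \<Longrightarrow>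
      row_zero_outside m (snd st) r lo hi \<Longrightarrow> row_zero_outside m (snd st') r lo hi"
    and "\<And>lo hi. row_zero_outside m (snd st) p lo hi \<Longrightarrow> row_zero_outside m (snd st) q lo hi \<Longrightarrow>
      row_zero_outside m (snd st') p lo hi"
    and "\<And>lo hi. row_zero_outside m (snd st) p lo hi \<Longrightarrow> row_zero_outside m (snd st) q lo hi \<Longrightarrow>
      j = lo \<Longrightarrow> row_zero_outside m (snd st') q (Suc lo) hi"
proof -
  obtain c s where cs: "c\<^sup>2 + s\<^sup>2 = 1" "p \<noteq> q"
    and kill: "(transpose_mat (givens N (p - 1) (q - 1) c s) * snd st) $$ (q - 1, j - 1) = 0"
    and st': "st' = (fst st * givens N (p - 1) (q - 1) c s,
                     transpose_mat (givens N (p - 1) (q - 1) c s) * snd st)"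
    using rot_stepE[OF st] by blast
  have pq: "p - 1 < N" "q - 1 < N" "p - 1 \<noteq> q - 1" using p q cs by auto
  have entry: "snd st' $$ (r, C) =
      (if r = p - 1 then c * snd st $$ (p - 1, C) - s * snd st $$ (q - 1, C)
       else if r = q - 1 then s * snd st $$ (p - 1, C) + c * snd st $$ (q - 1, C)
       else snd st $$ (r, C))"
    if "r < N" "C < m" for r C
    unfolding st' using transpose_givens_mult_index[OF R pq that] by simp
  show "row_zero_outside m (snd st') r lo hi"
    if "1 \<le> r" "r \<le> N" "r \<noteq> p" "r \<noteq> q" "row_zero_outside m (snd st) r lo hi" for r lo hi
    using that p q unfolding row_zero_outside_def by (auto simp: entry)
  show "row_zero_outside m (snd st') p lo hi"
    if "row_zero_outside m (snd st) p lo hi" "row_zero_outside m (snd st) q lo hi" for lo hi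
    using that p q unfolding row_zero_outside_def by (auto simp: entry)
  show "row_zero_outside m (snd st') q (Suc lo) hi"
    if "row_zero_outside m (snd st) p lo hi" "row_zero_outside m (snd st) q lo hi" "j = lo" for lo hi
    unfolding row_zero_outside_def
  proof (intro allI impI)
    fix C assume C: "1 \<le> C" "C \<le> m" "C < Suc lo \<or> hi < C"
    show "snd st' $$ (q - 1, C - 1) = 0"
    proof (cases "C = j")
      case True
      with kill st' show ?thesis by simp
    next
      case False
      with C that have "C < lo \<or> hi < C" by auto
      then show ?thesis using that C p q cs unfolding row_zero_outside_def by (auto simp: entry)
    qed
  qed
qed

text \<open>The invariants below describe \<open>R\<close> during iteration \<open>i\<close> of Algorithm 2; the initial rotations
  are steps (c) and (d) for \<open>i = 1\<close>. Once columns up to \<open>i\<close> are finished in the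
  bottom half (\<open>bottom_reduced\<close>), row \<open>n+1\<close> carries a fill-in window of width \<open>b\<close> starting at
  column \<open>i+1\<close>, rows \<open>n+2, \<dots>, n+i\<close> vanish, and each later row \<open>n+j\<close> lives on columns
  \<open>j, \<dots>, max j (i+b-1)\<close>.\<close>

definition top_banded :: "nat \<Rightarrow> nat \<Rightarrow> nat \<Rightarrow> real mat \<Rightarrow> bool" where
  "top_banded n b i R \<longleftrightarrow>
     (\<forall>r. i \<le> r \<longrightarrow> r \<le> n \<longrightarrow> row_zero_outside n R r (max i (r - b)) (r + b))"

definition bottom_reduced :: "nat \<Rightarrow> nat \<Rightarrow> nat \<Rightarrow> real mat \<Rightarrow> bool" where
  "bottom_reduced n b i R \<longleftrightarrow> row_zero_outside n R (n + 1) (i + 1) (i + b)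
     \<and> (\<forall>j. 2 \<le> j \<longrightarrow> j \<le> i \<longrightarrow> row_zero_outside n R (n + j) (n + 1) 0)
     \<and> (\<forall>j. i < j \<longrightarrow> j \<le> n \<longrightarrow> row_zero_outside n R (n + j) j (max j (i + b - 1)))"

definition alg2_inv :: "nat \<Rightarrow> nat \<Rightarrow> nat \<Rightarrow> real mat \<Rightarrow> bool" where
  "alg2_inv n b i R \<longleftrightarrow>
     R \<in> carrier_mat (2 * n) n \<and> top_banded n b i R \<and> bottom_reduced n b (i - 1) R"

text \<open>During step (b), before the rotation that annihilates \<open>R(n+i, j)\<close>.\<close>

definition alg2_inv_b :: "nat \<Rightarrow> nat \<Rightarrow> nat \<Rightarrow> nat \<Rightarrow> real mat \<Rightarrow> bool" where
  "alg2_inv_b n b i j R \<longleftrightarrow> R \<in> carrier_mat (2 * n) n \<and> top_banded n b i R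
     \<and> row_zero_outside n R (n + 1) i (i + b - 1)
     \<and> (\<forall>j'. 2 \<le> j' \<longrightarrow> j' < i \<longrightarrow> row_zero_outside n R (n + j') (n + 1) 0)
     \<and> row_zero_outside n R (n + i) j (i + b - 1)
     \<and> (\<forall>j'. i < j' \<longrightarrow> j' < j \<longrightarrow> j' \<le> n \<longrightarrow> row_zero_outside n R (n + j') j' (i + b - 1))
     \<and> (\<forall>j'. j \<le> j' \<longrightarrow> j' \<le> n \<longrightarrow> row_zero_outside n R (n + j') j' (max j' (i + b - 2)))"

definition alg2_inv_ab :: "nat \<Rightarrow> nat \<Rightarrow> nat \<Rightarrow> real mat \<Rightarrow> bool" where
  "alg2_inv_ab n b i R \<longleftrightarrow> R \<in> carrier_mat (2 * n) n \<and> top_banded n b i R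
     \<and> row_zero_outside n R (n + 1) i (i + b - 1)
     \<and> (\<forall>j. 2 \<le> j \<longrightarrow> j \<le> i \<longrightarrow> row_zero_outside n R (n + j) (n + 1) 0)
     \<and> (\<forall>j. i < j \<longrightarrow> j \<le> n \<longrightarrow> row_zero_outside n R (n + j) j (max j (i + b - 1)))"

text \<open>During step (d), before the rotation that annihilates \<open>R(j, i)\<close>.\<close>

definition alg2_inv_d :: "nat \<Rightarrow> nat \<Rightarrow> nat \<Rightarrow> nat \<Rightarrow> real mat \<Rightarrow> bool" where
  "alg2_inv_d n b i j R \<longleftrightarrow> R \<in> carrier_mat (2 * n) n \<and> bottom_reduced n b i R
     \<and> row_zero_outside n R i i (j - 1 + b)
     \<and> (\<forall>r. i < r \<longrightarrow> r < j \<longrightarrow> r \<le> n \<longrightarrow> row_zero_outside n R r (i + 1) (r + b))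
     \<and> (\<forall>r. j \<le> r \<longrightarrow> r \<le> n \<longrightarrow> row_zero_outside n R r (max i (r - b)) (r + b))"

lemma top_banded_keep:
  assumes st: "rot_step (2 * n) (p, q, j) st st'" and R: "snd st \<in> carrier_mat (2 * n) n"
    and p: "n < p" "p \<le> 2 * n" and q: "n < q" "q \<le> 2 * n"
    and T: "top_banded n b i (snd st)" and i: "1 \<le> i"
  shows "top_banded n b i (snd st')"
proof -
  have keep: "row_zero_outside n (snd st') r lo hi"
    if "1 \<le> r" "r \<le> n" "row_zero_outside n (snd st) r lo hi" for r lo hi
    using rot_step_R(1)[OF st R _ _ _ _ _ _ _ _ that(3)] p q that by auto
  show ?thesis using T i unfolding top_banded_def by (auto intro!: keep)
qed

lemma bottom_reduced_keep:
  assumes st: "rot_step (2 * n) (p, q, j) st st'" and R: "snd st \<in> carrier_mat (2 * n) n"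
    and p: "1 \<le> p" "p \<le> n" and q: "1 \<le> q" "q \<le> n"
    and B: "bottom_reduced n b i (snd st)" and i: "i \<le> n"
  shows "bottom_reduced n b i (snd st')"
proof -
  have keep: "row_zero_outside n (snd st') r lo hi"
    if "n < r" "r \<le> 2 * n" "row_zero_outside n (snd st) r lo hi" for r lo hi
    using rot_step_R(1)[OF st R _ _ _ _ _ _ _ _ that(3)] p q that by auto
  show ?thesis using B p i unfolding bottom_reduced_def by (auto intro!: keep)
qed

lemma alg2_stage_a:
  assumes st: "rot_step (2 * n) (n + 1, n + i, i) st st'" and I: "alg2_inv n b i (snd st)"
    and i: "2 \<le> i" "i \<le> n" and b: "1 \<le> b"
  shows "alg2_inv_b n b i (i + 1) (snd st')"
proof -
  have R: "snd st \<in> carrier_mat (2 * n) n" using I unfolding alg2_inv_def by auto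
  have p: "1 \<le> n + 1" "n + 1 \<le> 2 * n" and q: "1 \<le> n + i" "n + i \<le> 2 * n" using i by auto
  note rows = rot_step_R[OF st R p q]
  have z1: "row_zero_outside n (snd st) (n + 1) i (i + b - 1)"
    using I i unfolding alg2_inv_def bottom_reduced_def by auto
  have zi: "row_zero_outside n (snd st) (n + i) i (i + b - 1)"
  proof (rule row_zero_outside_mono[of _ _ _ i "max i (i - 1 + b - 1)"])
    show "row_zero_outside n (snd st) (n + i) i (max i (i - 1 + b - 1))"
      using I i unfolding alg2_inv_def bottom_reduced_def by auto
    show "max i (i - 1 + b - 1) \<le> i + b - 1" using b i by linarith
  qed simp
  have keep: "row_zero_outside n (snd st') r lo hi"
    if "1 \<le> r" "r \<le> 2 * n" "r \<noteq> n + 1" "r \<noteq> n + i" "row_zero_outside n (snd st) r lo hi"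
    for r lo hi
    using rows(1) that by auto
  show ?thesis
    unfolding alg2_inv_b_def
  proof (intro conjI allI impI)
    show "snd st' \<in> carrier_mat (2 * n) n" by (rule rot_step_R_carrier[OF st R])
    show "top_banded n b i (snd st')"
      by (rule top_banded_keep[OF st R]) (use i I in \<open>auto simp: alg2_inv_def\<close>)
    show "row_zero_outside n (snd st') (n + 1) i (i + b - 1)" using rows(2)[OF z1 zi] .
    show "row_zero_outside n (snd st') (n + i) (i + 1) (i + b - 1)" using rows(3)[OF z1 zi refl] by simp
    show "row_zero_outside n (snd st') (n + j') (n + 1) 0" if "2 \<le> j'" "j' < i" for j'
      by (rule keep) (use I i that in \<open>auto simp: alg2_inv_def bottom_reduced_def\<close>)
    show "row_zero_outside n (snd st') (n + j') j' (i + b - 1)" if "i < j'" "j' < i + 1" "j' \<le> n" for j'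
      using that by simp
    show "row_zero_outside n (snd st') (n + j') j' (max j' (i + b - 2))" if "i + 1 \<le> j'" "j' \<le> n" for j'
    proof (rule keep)
      show "row_zero_outside n (snd st) (n + j') j' (max j' (i + b - 2))"
        using I i that unfolding alg2_inv_def bottom_reduced_def
        by (auto simp: numeral_2_eq_2 elim!: allE[of _ j'] intro: row_zero_outside_mono)
    qed (use i that in auto)
  qed
qed

lemma alg2_stage_b_step:
  assumes st: "rot_step (2 * n) (n + j, n + i, j) st st'" and I: "alg2_inv_b n b i j (snd st)"
    and ij: "2 \<le> i" "i < j" "j \<le> n" "j \<le> b + i - 1"
  shows "alg2_inv_b n b i (Suc j) (snd st')"
proof -
  have R: "snd st \<in> carrier_mat (2 * n) n" using I unfolding alg2_inv_b_def by auto
  have p: "1 \<le> n + j" "n + j \<le> 2 * n" and q: "1 \<le> n + i" "n + i \<le> 2 * n" using ij by auto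
  note rows = rot_step_R[OF st R p q]
  have zj: "row_zero_outside n (snd st) (n + j) j (i + b - 1)"
    by (rule row_zero_outside_mono[of _ _ _ j "max j (i + b - 2)"])
      (use I ij in \<open>auto simp: alg2_inv_b_def\<close>)
  have zi: "row_zero_outside n (snd st) (n + i) j (i + b - 1)" using I unfolding alg2_inv_b_def by auto
  have keep: "row_zero_outside n (snd st') r lo hi"
    if "1 \<le> r" "r \<le> 2 * n" "r \<noteq> n + j" "r \<noteq> n + i" "row_zero_outside n (snd st) r lo hi"
    for r lo hi
    using rows(1) that by auto
  show ?thesis
    unfolding alg2_inv_b_def
  proof (intro conjI allI impI)
    show "snd st' \<in> carrier_mat (2 * n) n" by (rule rot_step_R_carrier[OF st R])
    show "top_banded n b i (snd st')"
      by (rule top_banded_keep[OF st R]) (use ij I in \<open>auto simp: alg2_inv_b_def\<close>)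
    show "row_zero_outside n (snd st') (n + 1) i (i + b - 1)"
      by (rule keep) (use I ij in \<open>auto simp: alg2_inv_b_def\<close>)
    show "row_zero_outside n (snd st') (n + j') (n + 1) 0" if "2 \<le> j'" "j' < i" for j'
      by (rule keep) (use I ij that in \<open>auto simp: alg2_inv_b_def\<close>)
    show "row_zero_outside n (snd st') (n + i) (Suc j) (i + b - 1)" using rows(3)[OF zj zi refl] .
    show "row_zero_outside n (snd st') (n + j') j' (i + b - 1)" if "i < j'" "j' < Suc j" "j' \<le> n" for j'
    proof (cases "j' = j")
      case True
      then show ?thesis using rows(2)[OF zj zi] by simp
    next
      case False
      then show ?thesis by (intro keep) (use I ij that in \<open>auto simp: alg2_inv_b_def\<close>)
    qed
    show "row_zero_outside n (snd st') (n + j') j' (max j' (i + b - 2))" if "Suc j \<le> j'" "j' \<le> n" for j'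
      by (rule keep) (use I ij that in \<open>auto simp: alg2_inv_b_def\<close>)
  qed
qed

lemma alg2_inv_b_done:
  assumes I: "alg2_inv_b n b i (Suc (min n (b + i - 1))) R"
  shows "alg2_inv_ab n b i R"
  unfolding alg2_inv_ab_def
proof (intro conjI allI impI)
  show "R \<in> carrier_mat (2 * n) n" "top_banded n b i R" "row_zero_outside n R (n + 1) i (i + b - 1)"
    using I unfolding alg2_inv_b_def by auto
  show "row_zero_outside n R (n + j) (n + 1) 0" if "2 \<le> j" "j \<le> i" for j
  proof (cases "j = i")
    case True
    have "row_zero_outside n R (n + i) (Suc (min n (b + i - 1))) (i + b - 1)"
      using I unfolding alg2_inv_b_def by auto
    then show ?thesis using True unfolding row_zero_outside_def by auto
  next
    case False
    then show ?thesis using I that unfolding alg2_inv_b_def by auto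
  qed
  show "row_zero_outside n R (n + j) j (max j (i + b - 1))" if "i < j" "j \<le> n" for j
  proof (cases "j < Suc (min n (b + i - 1))")
    case True
    then have "row_zero_outside n R (n + j) j (i + b - 1)"
      using I that unfolding alg2_inv_b_def by auto
    then show ?thesis by (rule row_zero_outside_mono) auto
  next
    case False
    then have "row_zero_outside n R (n + j) j (max j (i + b - 2))"
      using I that unfolding alg2_inv_b_def by auto
    then show ?thesis by (rule row_zero_outside_mono) (use False that in auto)
  qed
qed

lemma alg2_stage_ab:
  assumes i: "2 \<le> i" "i \<le> n" and b: "1 \<le> b" and I: "alg2_inv n b i (snd st)"
    and seq: "rot_seq (2 * n)
      ([(n + 1, n + i, i)] @ map (\<lambda>j. (n + j, n + i, j)) [i + 1..<Suc (min n (b + i - 1))]) st st'"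
  shows "alg2_inv_ab n b i (snd st')"
proof -
  obtain s1 where s1: "rot_step (2 * n) (n + 1, n + i, i) st s1"
    and s2: "rot_seq (2 * n) (map (\<lambda>j. (n + j, n + i, j)) [i + 1..<Suc (min n (b + i - 1))]) s1 st'"
    using rot_seq_appendD[OF seq] rot_seq_singleD by blast
  have "alg2_inv_b n b i (Suc (min n (b + i - 1))) (snd st')"
    by (rule rot_seq_map_induct[where I = "\<lambda>j s. alg2_inv_b n b i j (snd s)", OF _ s2
          alg2_stage_a[OF s1 I i b]])
      (use b i in \<open>auto intro!: alg2_stage_b_step\<close>)
  then show ?thesis by (rule alg2_inv_b_done)
qed

lemma alg2_stage_c:
  assumes st: "rot_step (2 * n) (i, n + 1, i) st st'" and I: "alg2_inv_ab n b i (snd st)"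
    and i: "1 \<le> i" "i \<le> n"
  shows "alg2_inv_d n b i (i + 1) (snd st')"
proof -
  have R: "snd st \<in> carrier_mat (2 * n) n" using I unfolding alg2_inv_ab_def by auto
  have p: "1 \<le> i" "i \<le> 2 * n" and q: "1 \<le> n + 1" "n + 1 \<le> 2 * n" using i by auto
  note rows = rot_step_R[OF st R p q]
  have zi: "row_zero_outside n (snd st) i i (i + b)"
    using I i unfolding alg2_inv_ab_def top_banded_def by (auto elim!: allE[of _ i])
  have z1: "row_zero_outside n (snd st) (n + 1) i (i + b)"
    by (rule row_zero_outside_mono[of _ _ _ i "i + b - 1"]) (use I in \<open>auto simp: alg2_inv_ab_def\<close>)
  have keep: "row_zero_outside n (snd st') r lo hi"
    if "1 \<le> r" "r \<le> 2 * n" "r \<noteq> i" "r \<noteq> n + 1" "row_zero_outside n (snd st) r lo hi" for r lo hi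
    using rows(1) that by auto
  show ?thesis
    unfolding alg2_inv_d_def
  proof (intro conjI allI impI)
    show "snd st' \<in> carrier_mat (2 * n) n" by (rule rot_step_R_carrier[OF st R])
    show "bottom_reduced n b i (snd st')"
      unfolding bottom_reduced_def
    proof (intro conjI allI impI)
      show "row_zero_outside n (snd st') (n + 1) (i + 1) (i + b)" using rows(3)[OF zi z1 refl] by simp
      show "row_zero_outside n (snd st') (n + j) (n + 1) 0" if "2 \<le> j" "j \<le> i" for j
        by (rule keep) (use I i that in \<open>auto simp: alg2_inv_ab_def\<close>)
      show "row_zero_outside n (snd st') (n + j) j (max j (i + b - 1))" if "i < j" "j \<le> n" for j
        by (rule keep) (use I i that in \<open>auto simp: alg2_inv_ab_def\<close>)
    qed
    show "row_zero_outside n (snd st') i i (i + 1 - 1 + b)" using rows(2)[OF zi z1] by simp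
    show "row_zero_outside n (snd st') r (i + 1) (r + b)" if "i < r" "r < i + 1" "r \<le> n" for r
      using that by simp
    show "row_zero_outside n (snd st') r (max i (r - b)) (r + b)" if "i + 1 \<le> r" "r \<le> n" for r
      by (rule keep) (use I i that in \<open>auto simp: alg2_inv_ab_def top_banded_def\<close>)
  qed
qed

lemma alg2_stage_d_step:
  assumes st: "rot_step (2 * n) (i, j, i) st st'" and I: "alg2_inv_d n b i j (snd st)"
    and ij: "1 \<le> i" "i < j" "j \<le> n"
  shows "alg2_inv_d n b i (Suc j) (snd st')"
proof -
  have R: "snd st \<in> carrier_mat (2 * n) n" using I unfolding alg2_inv_d_def by auto
  have p: "1 \<le> i" "i \<le> 2 * n" and q: "1 \<le> j" "j \<le> 2 * n" using ij by auto
  note rows = rot_step_R[OF st R p q]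
  have zi: "row_zero_outside n (snd st) i i (j + b)"
    by (rule row_zero_outside_mono[of _ _ _ i "j - 1 + b"]) (use I in \<open>auto simp: alg2_inv_d_def\<close>)
  have zj: "row_zero_outside n (snd st) j i (j + b)"
    by (rule row_zero_outside_mono[of _ _ _ "max i (j - b)" "j + b"])
      (use I ij in \<open>auto simp: alg2_inv_d_def\<close>)
  show ?thesis
    unfolding alg2_inv_d_def
  proof (intro conjI allI impI)
    show "snd st' \<in> carrier_mat (2 * n) n" by (rule rot_step_R_carrier[OF st R])
    show "bottom_reduced n b i (snd st')"
      by (rule bottom_reduced_keep[OF st R]) (use ij I in \<open>auto simp: alg2_inv_d_def\<close>)
    show "row_zero_outside n (snd st') i i (Suc j - 1 + b)" using rows(2)[OF zi zj] by simp
    show "row_zero_outside n (snd st') r (i + 1) (r + b)" if "i < r" "r < Suc j" "r \<le> n" for r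
    proof (cases "r = j")
      case True
      then show ?thesis using rows(3)[OF zi zj refl] by simp
    next
      case False
      then have "row_zero_outside n (snd st) r (i + 1) (r + b)"
        using I that unfolding alg2_inv_d_def by auto
      then show ?thesis using rows(1) that False ij by auto
    qed
    show "row_zero_outside n (snd st') r (max i (r - b)) (r + b)" if "Suc j \<le> r" "r \<le> n" for r
    proof -
      have "row_zero_outside n (snd st) r (max i (r - b)) (r + b)"
        using I that unfolding alg2_inv_d_def by auto
      then show ?thesis using rows(1) that ij by auto
    qed
  qed
qed

lemma alg2_inv_d_done:
  assumes I: "alg2_inv_d n b i (Suc (min n (b + i))) R"
  shows "alg2_inv n b (i + 1) R"
  unfolding alg2_inv_def
proof (intro conjI)
  show "R \<in> carrier_mat (2 * n) n" "bottom_reduced n b (i + 1 - 1) R"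
    using I unfolding alg2_inv_d_def by auto
  show "top_banded n b (i + 1) R"
    unfolding top_banded_def
  proof (intro allI impI)
    fix r assume r: "i + 1 \<le> r" "r \<le> n"
    show "row_zero_outside n R r (max (i + 1) (r - b)) (r + b)"
    proof (cases "r < Suc (min n (b + i))")
      case True
      then have "row_zero_outside n R r (i + 1) (r + b)" using I r unfolding alg2_inv_d_def by auto
      then show ?thesis by (rule row_zero_outside_mono) (use True r in auto)
    next
      case False
      then have "row_zero_outside n R r (max i (r - b)) (r + b)"
        using I r unfolding alg2_inv_d_def by auto
      moreover have "i + b < r" using False r by auto
      then have "max i (r - b) = max (i + 1) (r - b)" by auto
      ultimately show ?thesis by simp
    qed
  qed
qed

lemma alg2_stage_cd:
  assumes i: "1 \<le> i" "i \<le> n" and I: "alg2_inv_ab n b i (snd st)"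
    and seq: "rot_seq (2 * n) ([(i, n + 1, i)]
      @ (if i < n then map (\<lambda>j. (i, j, i)) [i + 1..<Suc (min n (b + i))] else [])) st st'"
  shows "alg2_inv n b (i + 1) (snd st')"
proof -
  obtain s1 where s1: "rot_step (2 * n) (i, n + 1, i) st s1"
    and s2: "rot_seq (2 * n) (if i < n then map (\<lambda>j. (i, j, i)) [i + 1..<Suc (min n (b + i))] else [])
      s1 st'"
    using rot_seq_appendD[OF seq] rot_seq_singleD by blast
  note I1 = alg2_stage_c[OF s1 I i]
  show ?thesis
  proof (cases "i < n")
    case True
    then have s2': "rot_seq (2 * n) (map (\<lambda>j. (i, j, i)) [i + 1..<Suc (min n (b + i))]) s1 st'"
      using s2 by simp
    have "alg2_inv_d n b i (Suc (min n (b + i))) (snd st')"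
      by (rule rot_seq_map_induct[where I = "\<lambda>j s. alg2_inv_d n b i j (snd s)", OF _ s2' I1])
        (use i True in \<open>auto intro!: alg2_stage_d_step\<close>)
    then show ?thesis by (rule alg2_inv_d_done)
  next
    case False
    then have "st' = s1" and "Suc (min n (b + i)) = i + 1" using s2 i by (auto elim: rot_seq.cases)
    then show ?thesis using alg2_inv_d_done[of n b i] I1 by simp
  qed
qed

lemma alg2_init_inv_ab:
  assumes A: "A \<in> carrier_mat n n" and band: "bandwidth_le A b" and b: "1 \<le> b"
  shows "alg2_inv_ab n b 1 (snd (alg2_init n A))"
  unfolding alg2_inv_ab_def
proof (intro conjI allI impI)
  let ?R = "snd (alg2_init n A)"
  show "?R \<in> carrier_mat (2 * n) n" by (simp add: alg2_init_def)
  show "top_banded n b 1 ?R"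
    unfolding top_banded_def row_zero_outside_def
  proof (intro allI impI)
    fix r C assume r: "1 \<le> r" "r \<le> n" and C: "1 \<le> C" "C \<le> n" "C < max 1 (r - b) \<or> r + b < C"
    have "A $$ (r - 1, C - 1) = 0" by (rule bandwidth_le_zero[OF band]) (use r C A in auto)
    then show "?R $$ (r - 1, C - 1) = 0" using r C by (simp add: alg2_init_def)
  qed
  show "row_zero_outside n ?R (n + 1) 1 (1 + b - 1)"
    unfolding row_zero_outside_def using b by (auto simp: alg2_init_def)
  show "row_zero_outside n ?R (n + j) (n + 1) 0" if "2 \<le> j" "j \<le> 1" for j
    using that by simp
  show "row_zero_outside n ?R (n + j) j (max j (1 + b - 1))" if "1 < j" "j \<le> n" for j
    unfolding row_zero_outside_def using that by (auto simp: alg2_init_def)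
qed

lemma alg2_ops_in_range:
  "1 < n \<Longrightarrow> \<forall>(p, q, j) \<in> set (alg2_ops n b). 1 \<le> p \<and> p \<le> 2 * n \<and> 1 \<le> q \<and> q \<le> 2 * n"
  unfolding alg2_ops_def by (auto split: if_splits)

lemma alg2_final_inv:
  assumes A: "A \<in> carrier_mat n n" and band: "bandwidth_le A b" and b: "1 < b" "b < n"
    and seq: "rot_seq (2 * n) (alg2_ops n b) (alg2_init n A) st"
  shows "alg2_inv n b (Suc n) (snd st)"
proof -
  define ab where "ab i = [(n + 1, n + i, i)] @ map (\<lambda>j. (n + j, n + i, j)) [i + 1..<Suc (min n (b + i - 1))]"
    for i
  define cd where "cd i = [(i, n + 1, i)]
    @ (if i < n then map (\<lambda>j. (i, j, i)) [i + 1..<Suc (min n (b + i))] else [])" for i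
  have ops: "alg2_ops n b = cd 1 @ concat (map (\<lambda>i. ab i @ cd i) [2..<Suc n])"
    using b unfolding alg2_ops_def ab_def cd_def by (simp add: numeral_2_eq_2)
  obtain s1 where s1: "rot_seq (2 * n) (cd 1) (alg2_init n A) s1"
    and s2: "rot_seq (2 * n) (concat (map (\<lambda>i. ab i @ cd i) [2..<Suc n])) s1 st"
    using rot_seq_appendD[OF seq[unfolded ops]] by blast
  have "alg2_inv n b (1 + 1) (snd s1)"
    by (rule alg2_stage_cd[OF _ _ alg2_init_inv_ab[OF A band] s1[unfolded cd_def]]) (use b in auto)
  then have init: "alg2_inv n b 2 (snd s1)" by (simp add: numeral_2_eq_2)
  show ?thesis
  proof (rule rot_seq_concat_induct[where I = "\<lambda>i s. alg2_inv n b i (snd s)", OF _ s2])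
    fix i s s'
    assume i: "2 \<le> i" "i < Suc n" and I: "alg2_inv n b i (snd s)"
      and "rot_seq (2 * n) (ab i @ cd i) s s'"
    then obtain s3 where ab: "rot_seq (2 * n) (ab i) s s3" and cd: "rot_seq (2 * n) (cd i) s3 s'"
      using rot_seq_appendD by blast
    have inv_ab: "alg2_inv_ab n b i (snd s3)"
      by (rule alg2_stage_ab[OF _ _ _ I ab[unfolded ab_def]]) (use i b in auto)
    have "alg2_inv n b (i + 1) (snd s')"
      by (rule alg2_stage_cd[OF _ _ inv_ab cd[unfolded cd_def]]) (use i in auto)
    then show "alg2_inv n b (Suc i) (snd s')" by simp
  qed (use init b in auto)
qed

lemma alg2_inv_final_lower_zero:
  assumes "alg2_inv n b (Suc n) R" and r: "n \<le> r" "r < 2 * n" and c: "c < n"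
  shows "R $$ (r, c) = 0"
proof -
  have B: "bottom_reduced n b n R" using assms(1) unfolding alg2_inv_def by simp
  show ?thesis
  proof (cases "r = n")
    case True
    have "row_zero_outside n R (n + 1) (n + 1) (n + b)" using B unfolding bottom_reduced_def by simp
    then show ?thesis using True c unfolding row_zero_outside_def by (auto elim!: allE[of _ "Suc c"])
  next
    case False
    then have j: "2 \<le> r + 1 - n" "r + 1 - n \<le> n" using r by auto
    have "row_zero_outside n R (n + (r + 1 - n)) (n + 1) 0"
      using B j unfolding bottom_reduced_def by blast
    then show ?thesis using r c unfolding row_zero_outside_def by (auto elim!: allE[of _ "Suc c"])
  qed
qed

lemma alg2_QR:
  assumes A: "A \<in> carrier_mat n n" and band: "bandwidth_le A b" and b: "1 < b" "b < n"
    and seq: "rot_seq (2 * n) (alg2_ops n b) (alg2_init n A) (Q, R)"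
  shows "Q \<in> carrier_mat (2 * n) (2 * n)" and "R \<in> carrier_mat (2 * n) n"
    and "transpose_mat Q * Q = 1\<^sub>m (2 * n)" and "Q * R = snd (alg2_init n A)"
    and "\<And>i j. n \<le> i \<Longrightarrow> i < 2 * n \<Longrightarrow> j < n \<Longrightarrow> R $$ (i, j) = 0"
proof -
  have R0: "snd (alg2_init n A) \<in> carrier_mat (2 * n) n" and Q0: "fst (alg2_init n A) = 1\<^sub>m (2 * n)"
    unfolding alg2_init_def by auto
  show "Q \<in> carrier_mat (2 * n) (2 * n)" "R \<in> carrier_mat (2 * n) n"
    "transpose_mat Q * Q = 1\<^sub>m (2 * n)" "Q * R = snd (alg2_init n A)"
    using rot_seq_QR[OF seq alg2_ops_in_range[of n b], of n] b R0 unfolding Q0 by auto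
  show "R $$ (i, j) = 0" if "n \<le> i" "i < 2 * n" "j < n" for i j
    using alg2_inv_final_lower_zero[OF alg2_final_inv[OF A band b seq]] that by simp
qed

theorem theorem4p4:
  fixes A Q :: "real mat" and n b :: nat
  assumes "A \<in> carrier_mat n n"
    and "transpose_mat A = A"
    and "bandwidth_le A b"
    and "1 < b" and "b < n"
    and "alg2_Q n b A Q"
  shows "\<forall>k. 1 \<le> k \<and> k < n \<longrightarrow>
    (let Q1 = mat n n (\<lambda>(i, j). Q $$ (i, j));
         Q2 = mat n n (\<lambda>(i, j). Q $$ (n + i, j));
         M = Q1 * transpose_mat Q2
     in vec_space.rank k (submatrix M {..<k} {k..<n}) \<le> 2 * b
      \<and> vec_space.rank (n - k) (submatrix M {k..<n} {..<k}) \<le> 2 * b)"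
proof -
  note A = assms(1) and sym = assms(2) and band = assms(3)
  from assms(6) obtain R where seq: "rot_seq (2 * n) (alg2_ops n b) (alg2_init n A) (Q, R)"
    unfolding alg2_Q_def by auto
  note QR = alg2_QR[OF A band assms(4,5) seq]
  define M where "M = top_square n Q * transpose_mat (bottom_square n Q)"
  define P where "P = bottom_square n Q * transpose_mat (bottom_square n Q)"
  have factors: "top_square n Q * top_square n R = A" "bottom_square n Q * top_square n R = 1\<^sub>m n"
    "transpose_mat (top_square n Q) * top_square n Q
       + transpose_mat (bottom_square n Q) * bottom_square n Q = 1\<^sub>m n"
    using stacked_QR_square_blocks[OF A QR(1-3)] QR(4,5) by (auto simp: alg2_init_def)
  have "M = A * P" "A * M + P = 1\<^sub>m n"
    using resolvent_of_stacked_factors[OF A sym _ _ _ factors] unfolding M_def P_def by auto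
  moreover have "M \<in> carrier_mat n n" "P \<in> carrier_mat n n"
    unfolding M_def P_def by auto
  ultimately show ?thesis
    using banded_resolvent_offdiag_rank_le[OF A sym band, of M P]
    unfolding M_def top_square_def bottom_square_def Let_def by auto
qed

end
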